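(* Let $n\ge2$, let $\mathbf{x}=(x_1,\dots,x_n)^T\in\mathbb{C}^n$ with $x_i\neq x_j$ for all $i\neq j$, and let $F$, $p$, $F''$ be as in the context. Let $\mathbf{y}$ be the result of one step of the Chebyshev method for $F$ starting from $\mathbf{x}$, i.e. \[ \mathbf{y}=\mathbf{x}-F'(\mathbf{x})^{-1}\Big(F(\mathbf{x})+\tfrac12\,F''(\mathbf{x})\big(F'(\mathbf{x})^{-1}F(\mathbf{x}),\,F'(\mathbf{x})^{-1}F(\mathbf{x})\big)\Big). \] With $W_l=\dfrac{p(x_l)}{\prod_{j=1,\,j\neq l}^n(x_l-x_j)}$ for $l=1,\dots,n$, one has for every $j=1,\dots,n$ \[ y_j=x_j-W_j\Big(1+\sum_{\nu=1,\,\nu\neq j}^n\frac{W_\nu}{x_\nu-x_j}\Big). \] Equivalently, with $B^{(l)}(t)=-\prod_{i=1,\,i\neq l}^n(t-x_i)$, \[ y_j=x_j-\frac{p(x_j)}{B^{(j)}(x_j)}\Big(\sum_{\nu=1,\,\nu\neq j}^n\frac{p(x_\nu)}{(x_\nu-x_j)\,B^{(\nu)}(x_\nu)}-1\Big). \]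
   Context: Let $p(t)=t^n+a_{n-1}t^{n-1}+\dots+a_1t+a_0$ be a monic polynomial of degree $n$ with real coefficients, and set $\mathbf{a}=(a_0,a_1,\dots,a_{n-1})^T$. Define $V=(v_1,\dots,v_n)^T:\mathbb{C}^n\to\mathbb{C}^n$ by \[ v_{n-\nu+1}(\mathbf{x})=\sum_{i_1<i_2<\dots<i_\nu}(-x_{i_1})(-x_{i_2})\cdots(-x_{i_\nu}),\qquad \nu=1,\dots,n, \] (the sum running over all $\nu$-element index sets $\{i_1<\dots<i_\nu\}\subseteq\{1,\dots,n\}$), so that $\prod_{j=1}^n(t-x_j)=t^n+\sum_{j=0}^{n-1}v_{j+1}(\mathbf{x})t^j$. Define $F=(f_1,\dots,f_n)^T:\mathbb{C}^n\to\mathbb{C}^n$ by $F(\mathbf{x})=V(\mathbf{x})-\mathbf{a}$, with Jacobian $F'(\mathbf{x})$ (invertible when the $x_i$ are pairwise distinct). For $k=1,\dots,n$, $A^{(k)}(\mathbf{x})\in\mathbb{C}^{n\times n}$ is the matrix whose $(i,l)$ entry is $\partial^2 f_i(\mathbf{x})/\partial x_l\partial x_k$, and the second derivative is the bilinear map $F''(\mathbf{x})(\mathbf{y},\mathbf{z})=\sum_{k=1}^n z_k\,A^{(k)}(\mathbf{x})\,\mathbf{y}$ for $\mathbf{y},\mathbf{z}\in\mathbb{C}^n$, i.e. $F''(\mathbf{x})(\mathbf{y},\mathbf{z})_i=\sum_{k,l}\frac{\partial^2 f_i(\mathbf{x})}{\partial x_l\partial x_k}y_l z_k$. *)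

theory Defs
  imports "HOL-Analysis.Analysis"
begin

text \<open>Conventions: vectors in C^n are functions nat => complex, component i (0-based, i < n)
  standing for the paper's component i+1. The coefficient vector a is nat => real with
  a j = a_j for j < n.\<close>

definition Vfun :: "nat \<Rightarrow> (nat \<Rightarrow> complex) \<Rightarrow> nat \<Rightarrow> complex" where
  "Vfun n x k = (\<Sum>S\<in>{S. S \<subseteq> {..<n} \<and> card S = n - k}. \<Prod>i\<in>S. - x i)"

definition Ffun :: "nat \<Rightarrow> (nat \<Rightarrow> real) \<Rightarrow> (nat \<Rightarrow> complex) \<Rightarrow> nat \<Rightarrow> complex" where
  "Ffun n a x k = Vfun n x k - complex_of_real (a k)"

definition pval :: "nat \<Rightarrow> (nat \<Rightarrow> real) \<Rightarrow> complex \<Rightarrow> complex" where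
  "pval n a t = t ^ n + (\<Sum>j<n. complex_of_real (a j) * t ^ j)"

definition pderivF :: "((nat \<Rightarrow> complex) \<Rightarrow> nat \<Rightarrow> complex) \<Rightarrow> (nat \<Rightarrow> complex) \<Rightarrow> nat \<Rightarrow> nat \<Rightarrow> complex" where
  "pderivF G x i l = deriv (\<lambda>t. G (x(l := t)) i) (x l)"

definition pderiv2F :: "((nat \<Rightarrow> complex) \<Rightarrow> nat \<Rightarrow> complex) \<Rightarrow> (nat \<Rightarrow> complex) \<Rightarrow> nat \<Rightarrow> nat \<Rightarrow> nat \<Rightarrow> complex" where
  "pderiv2F G x i l k = deriv (\<lambda>t. pderivF G (x(k := t)) i l) (x k)"

definition second_deriv_app :: "nat \<Rightarrow> ((nat \<Rightarrow> complex) \<Rightarrow> nat \<Rightarrow> complex) \<Rightarrow> (nat \<Rightarrow> complex)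
    \<Rightarrow> (nat \<Rightarrow> complex) \<Rightarrow> (nat \<Rightarrow> complex) \<Rightarrow> nat \<Rightarrow> complex" where
  "second_deriv_app n G x y z i = (\<Sum>k<n. \<Sum>l<n. pderiv2F G x i l k * y l * z k)"

definition inv_apply :: "nat \<Rightarrow> (nat \<Rightarrow> nat \<Rightarrow> complex) \<Rightarrow> (nat \<Rightarrow> complex) \<Rightarrow> nat \<Rightarrow> complex" where
  "inv_apply n M b = (THE u. (\<forall>i<n. (\<Sum>l<n. M i l * u l) = b i) \<and> (\<forall>i\<ge>n. u i = 0))"

definition chebyshev_step :: "nat \<Rightarrow> (nat \<Rightarrow> real) \<Rightarrow> (nat \<Rightarrow> complex) \<Rightarrow> nat \<Rightarrow> complex" where
  "chebyshev_step n a x =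
    (let F = Ffun n a; J = pderivF F x; u = inv_apply n J (F x);
         w = (\<lambda>i. F x i + (1/2) * second_deriv_app n F x u u i)
     in (\<lambda>j. x j - inv_apply n J w j))"

definition Weier :: "nat \<Rightarrow> (nat \<Rightarrow> real) \<Rightarrow> (nat \<Rightarrow> complex) \<Rightarrow> nat \<Rightarrow> complex" where
  "Weier n a x l = pval n a (x l) / (\<Prod>j\<in>{..<n} - {l}. (x l - x j))"

definition Bpoly :: "nat \<Rightarrow> (nat \<Rightarrow> complex) \<Rightarrow> nat \<Rightarrow> complex \<Rightarrow> complex" where
  "Bpoly n x l t = - (\<Prod>i\<in>{..<n} - {l}. (t - x i))"

end

theory Submission
  imports Defs "HOL-Computational_Algebra.Polynomial"
begin

text \<open>Read a coefficient vector \<open>c\<close> as the polynomial \<open>\<Sum>i<n. c i * t ^ i\<close>. Then \<open>F(x)\<close> is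
  \<open>\<Prod>m (t - x m) - p(t)\<close>, the \<open>l\<close>-th column of \<open>F'(x)\<close> is \<open>B\<^sub>l(t)\<close>, and for \<open>l \<noteq> k\<close> the
  \<open>(l, k)\<close>-column of \<open>F''(x)\<close> is \<open>\<Prod>m\<notin>{l,k} (t - x m)\<close> (it is zero for \<open>l = k\<close>).
  Since \<open>B\<^sub>l\<close> vanishes at the nodes \<open>x j\<close>, \<open>j \<noteq> l\<close>, evaluation at the \<open>n\<close> distinct nodes, which
  is injective on coefficient vectors, diagonalises \<open>F'(x)\<close>: the \<open>j\<close>-th entry of \<open>F'(x)\<^sup>-\<^sup>1 b\<close>
  is \<open>b(x j) / B\<^sub>j(x j)\<close>. Hence \<open>F'(x)\<^sup>-\<^sup>1 F(x) = W\<close>, and at \<open>x j\<close> only the columns of \<open>F''(x)\<close>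
  with \<open>j \<in> {l, k}\<close> survive, which produces the term \<open>\<Sum>\<nu>\<noteq>j W\<^sub>\<nu> / (x\<^sub>\<nu> - x\<^sub>j)\<close>.\<close>

definition root_poly :: "('i \<Rightarrow> 'a::comm_ring_1) \<Rightarrow> 'i set \<Rightarrow> 'a poly" where
  "root_poly x S = (\<Prod>m\<in>S. [:- x m, 1:])"

lemma poly_root_poly [simp]: "poly (root_poly x S) t = (\<Prod>m\<in>S. t - x m)"
  by (simp add: root_poly_def poly_prod)

lemma poly_root_poly_node: "finite S \<Longrightarrow> j \<in> S \<Longrightarrow> poly (root_poly x S) (x j) = 0"
  by (auto intro!: prod_zero)

lemma degree_root_poly_le: "finite S \<Longrightarrow> degree (root_poly x S) \<le> card S"
  unfolding root_poly_def
  by (rule order.trans[OF degree_prod_sum_le]) (auto intro: sum_bounded_above[where K = 1, simplified])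

lemma degree_root_poly_omit_less:
  assumes "l < n" "l \<in> L"
  shows "degree (root_poly x ({..<n} - L)) < n"
proof -
  have "degree (root_poly x ({..<n} - L)) \<le> card ({..<n} - L)"
    by (rule degree_root_poly_le) auto
  also have "\<dots> < n"
    using assms by (intro psubset_card_mono[where B = "{..<n}", simplified]) auto
  finally show ?thesis .
qed

lemma root_poly_fun_upd:
  "finite S \<Longrightarrow> root_poly (x(l := t)) S
     = (if l \<in> S then [:- t, 1:] * root_poly x (S - {l}) else root_poly x S)"
  unfolding root_poly_def by (auto simp: prod.remove intro!: prod.cong)

lemma coeff_root_poly:
  fixes x :: "'i \<Rightarrow> 'a::comm_ring_1"
  assumes "finite S" "k \<le> card S"
  shows "coeff (root_poly x S) k = (\<Sum>T\<in>{T. T \<subseteq> S \<and> card T = card S - k}. \<Prod>i\<in>T. - x i)"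
proof -
  have "root_poly x S = (\<Prod>m\<in>S. [:- x m:] + monom 1 1)"
    unfolding root_poly_def by (simp add: monom_altdef)
  also have "\<dots> = (\<Sum>T\<in>Pow S. (\<Prod>m\<in>T. [:- x m:]) * (\<Prod>m\<in>S - T. monom 1 1))"
    by (rule prod_add[OF assms(1)])
  also have "\<dots> = (\<Sum>T\<in>Pow S. monom (\<Prod>m\<in>T. - x m) (card (S - T)))"
    using assms(1)
    by (intro sum.cong refl)
      (simp add: prod_to_poly finite_subset mult_monom monom_altdef flip: power_one)
  finally have "coeff (root_poly x S) k
      = (\<Sum>T\<in>Pow S. if card (S - T) = k then \<Prod>m\<in>T. - x m else 0)"
    by (simp add: coeff_sum coeff_monom eq_commute)
  also have "\<dots> = (\<Sum>T\<in>{T\<in>Pow S. card (S - T) = k}. \<Prod>m\<in>T. - x m)"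
    using assms(1) by (subst sum.inter_filter) auto
  also have "{T\<in>Pow S. card (S - T) = k} = {T. T \<subseteq> S \<and> card T = card S - k}"
    using assms by (auto simp: card_Diff_subset finite_subset card_mono)
  finally show ?thesis .
qed

lemma coeff_linear_factor_mult:
  fixes t :: "'a::comm_ring_1"
  shows "coeff ([:- t, 1:] * q) i = coeff (pCons 0 q) i - t * coeff q i"
  by (cases i) (auto simp: coeff_pCons algebra_simps)

lemma poly_eq_sum_coeff:
  fixes p :: "'a::comm_semiring_1 poly"
  assumes "degree p < N"
  shows "poly p t = (\<Sum>i<N. coeff p i * t ^ i)"
  unfolding poly_altdef
  by (rule sum.mono_neutral_left) (use assms in \<open>auto simp: coeff_eq_0\<close>)

lemma coeffs_eq_if_sums_agree_on_nodes:
  fixes c d :: "nat \<Rightarrow> 'a::idom"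
  assumes inj: "inj_on x {..<n}"
    and agree: "\<And>j. j < n \<Longrightarrow> (\<Sum>i<n. c i * x j ^ i) = (\<Sum>i<n. d i * x j ^ i)"
    and "i < n"
  shows "c i = d i"
proof -
  define P where "P e = (\<Sum>i<n. monom (e i) i)" for e :: "nat \<Rightarrow> 'a"
  have degree_P: "degree (P e) < n" for e
    unfolding P_def using \<open>i < n\<close>
    by (intro le_less_trans[OF degree_sum_le[where n = "n - 1"]])
      (auto intro: order.trans[OF degree_monom_le])
  have "P c = P d"
  proof (rule poly_eqI_degree[of "x ` {..<n}"])
    show "poly (P c) t = poly (P d) t" if "t \<in> x ` {..<n}" for t
      using that agree by (auto simp: P_def poly_sum poly_monom)
    show "degree (P c) < card (x ` {..<n})" "degree (P d) < card (x ` {..<n})"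
      using degree_P card_image[OF inj] by auto
  qed
  then have "coeff (P c) i = coeff (P d) i" by simp
  then show ?thesis using \<open>i < n\<close> by (simp add: P_def coeff_sum coeff_monom)
qed

lemma inv_apply_diagonalized_by_nodes:
  fixes M :: "nat \<Rightarrow> nat \<Rightarrow> complex"
  assumes inj: "inj_on x {..<n}"
    and diag: "\<And>l j. l < n \<Longrightarrow> j < n \<Longrightarrow> (\<Sum>i<n. M i l * x j ^ i) = (if l = j then d j else 0)"
    and nz: "\<And>j. j < n \<Longrightarrow> d j \<noteq> 0"
    and "j < n"
  shows "inv_apply n M b j = (\<Sum>i<n. b i * x j ^ i) / d j"
proof -
  have eval_Mu: "(\<Sum>i<n. (\<Sum>l<n. M i l * u l) * x j ^ i) = u j * d j" if "j < n" for u j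
  proof -
    have "(\<Sum>i<n. (\<Sum>l<n. M i l * u l) * x j ^ i) = (\<Sum>l<n. u l * (\<Sum>i<n. M i l * x j ^ i))"
      unfolding sum_distrib_left sum_distrib_right by (subst sum.swap) (simp add: mult_ac)
    also have "\<dots> = (\<Sum>l<n. if l = j then u l * d j else 0)"
      using that by (intro sum.cong) (simp_all add: diag)
    also have "\<dots> = u j * d j"
      using that by simp
    finally show ?thesis .
  qed
  have solves_iff: "(\<forall>i<n. (\<Sum>l<n. M i l * u l) = b i) \<longleftrightarrow> (\<forall>j<n. u j * d j = (\<Sum>i<n. b i * x j ^ i))"
    for u
  proof
    assume "\<forall>i<n. (\<Sum>l<n. M i l * u l) = b i"
    then show "\<forall>j<n. u j * d j = (\<Sum>i<n. b i * x j ^ i)"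
      using eval_Mu[of _ u] by simp
  next
    assume "\<forall>j<n. u j * d j = (\<Sum>i<n. b i * x j ^ i)"
    then show "\<forall>i<n. (\<Sum>l<n. M i l * u l) = b i"
      using eval_Mu[of _ u] by (auto intro: coeffs_eq_if_sums_agree_on_nodes[OF inj])
  qed
  define z where "z l = (if l < n then (\<Sum>i<n. b i * x l ^ i) / d l else 0)" for l
  have "inv_apply n M b = z"
    unfolding inv_apply_def
  proof (rule the_equality)
    show "(\<forall>i<n. (\<Sum>l<n. M i l * z l) = b i) \<and> (\<forall>i\<ge>n. z i = 0)"
      unfolding solves_iff using nz by (simp add: z_def)
    fix u assume u: "(\<forall>i<n. (\<Sum>l<n. M i l * u l) = b i) \<and> (\<forall>i\<ge>n. u i = 0)"
    show "u = z"
    proof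
      fix l
      show "u l = z l"
        using u nz[of l] unfolding solves_iff by (cases "l < n") (simp_all add: z_def eq_divide_eq)
    qed
  qed
  with \<open>j < n\<close> show ?thesis by (simp add: z_def)
qed

lemma deriv_affine: "deriv (\<lambda>t::complex. c - t * d) z = - d"
  by (rule DERIV_imp_deriv) (auto intro!: derivative_eq_intros)

lemma Vfun_eq_coeff_root_poly: "k < n \<Longrightarrow> Vfun n x k = coeff (root_poly x {..<n}) k"
  unfolding Vfun_def by (simp add: coeff_root_poly)

lemma sum_Ffun_powers:
  "(\<Sum>i<n. Ffun n a x i * t ^ i) = poly (root_poly x {..<n}) t - pval n a t"
proof -
  have "{T. T \<subseteq> {..<n} \<and> card T = 0} = {{}}"
    by (auto dest: finite_subset)
  then have "coeff (root_poly x {..<n}) n = 1"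
    by (simp add: coeff_root_poly)
  moreover have "poly (root_poly x {..<n}) t = (\<Sum>i<Suc n. coeff (root_poly x {..<n}) i * t ^ i)"
    by (rule poly_eq_sum_coeff) (use degree_root_poly_le[of "{..<n}" x] in auto)
  ultimately show ?thesis
    by (simp add: Ffun_def pval_def Vfun_eq_coeff_root_poly sum_subtractf left_diff_distrib)
qed

lemma pderivF_Ffun:
  assumes "l < n" "i < n"
  shows "pderivF (Ffun n a) x i l = - coeff (root_poly x ({..<n} - {l})) i"
proof -
  have "(\<lambda>t. Ffun n a (x(l := t)) i)
      = (\<lambda>t. (coeff (pCons 0 (root_poly x ({..<n} - {l}))) i - a i) - t * coeff (root_poly x ({..<n} - {l})) i)"
    using assms by (auto simp: Ffun_def Vfun_eq_coeff_root_poly root_poly_fun_upd coeff_linear_factor_mult)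
  then show ?thesis unfolding pderivF_def by (simp add: deriv_affine)
qed

lemma pderiv2F_Ffun:
  assumes "l < n" "k < n" "i < n"
  shows "pderiv2F (Ffun n a) x i l k = (if k = l then 0 else coeff (root_poly x ({..<n} - {l, k})) i)"
proof (cases "k = l")
  case True
  with assms have "(\<lambda>t. pderivF (Ffun n a) (x(k := t)) i l) = (\<lambda>t. - coeff (root_poly x ({..<n} - {l})) i)"
    by (auto simp: pderivF_Ffun root_poly_fun_upd)
  with True show ?thesis unfolding pderiv2F_def by simp
next
  case False
  with assms have affine: "(\<lambda>t. pderivF (Ffun n a) (x(k := t)) i l)
      = (\<lambda>t. - coeff (pCons 0 (root_poly x ({..<n} - {l, k}))) i - t * - coeff (root_poly x ({..<n} - {l, k})) i)"
    by (auto simp: pderivF_Ffun root_poly_fun_upd coeff_linear_factor_mult Diff_insert2[symmetric])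
  show ?thesis
    unfolding pderiv2F_def affine deriv_affine using False by simp
qed

lemma Bpoly_eq_poly_root_poly: "Bpoly n x l t = - poly (root_poly x ({..<n} - {l})) t"
  by (simp add: Bpoly_def)

lemma Bpoly_other_node: "j < n \<Longrightarrow> j \<noteq> l \<Longrightarrow> Bpoly n x l (x j) = 0"
  unfolding Bpoly_def by (auto intro!: prod_zero bexI[of _ j])

lemma Bpoly_own_node_nonzero:
  "\<forall>i<n. \<forall>j<n. i \<noteq> j \<longrightarrow> x i \<noteq> x j \<Longrightarrow> j < n \<Longrightarrow> Bpoly n x j (x j) \<noteq> 0"
  unfolding Bpoly_def neg_equal_0_iff_equal by (subst prod_zero_iff) auto

lemma prod_omit_pair_eq_Bpoly_div:
  assumes "\<forall>i<n. \<forall>j<n. i \<noteq> j \<longrightarrow> x i \<noteq> x j"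
    and "j < n" "l < n" "l \<noteq> j"
  shows "(\<Prod>m\<in>{..<n} - {j, l}. x j - x m) = Bpoly n x j (x j) / (x l - x j)"
proof -
  have "Bpoly n x j (x j) = (x l - x j) * (\<Prod>m\<in>{..<n} - {j, l}. x j - x m)"
    unfolding Bpoly_def using assms(3,4)
    by (subst prod.remove[of _ l]) (auto simp: Diff_insert2[symmetric] algebra_simps)
  moreover have "x l - x j \<noteq> 0"
    using assms by auto
  ultimately show ?thesis
    by simp
qed

lemma Weier_eq: "Weier n a x l = - pval n a (x l) / Bpoly n x l (x l)"
  by (simp add: Weier_def Bpoly_def)

lemma sum_pderivF_Ffun_powers:
  assumes "l < n"
  shows "(\<Sum>i<n. pderivF (Ffun n a) x i l * t ^ i) = Bpoly n x l t"
proof -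
  have "(\<Sum>i<n. pderivF (Ffun n a) x i l * t ^ i) = - (\<Sum>i<n. coeff (root_poly x ({..<n} - {l})) i * t ^ i)"
    using assms by (simp add: pderivF_Ffun sum_negf)
  also have "\<dots> = Bpoly n x l t"
    using poly_eq_sum_coeff[OF degree_root_poly_omit_less[OF assms, of "{l}" x]]
    by (simp add: Bpoly_eq_poly_root_poly del: poly_root_poly)
  finally show ?thesis .
qed

lemma sum_pderiv2F_Ffun_powers:
  assumes "l < n" "k < n"
  shows "(\<Sum>i<n. pderiv2F (Ffun n a) x i l k * t ^ i)
    = (if k = l then 0 else poly (root_poly x ({..<n} - {l, k})) t)"
  using assms degree_root_poly_omit_less[OF assms(1), of "{l, k}" x]
  by (simp add: pderiv2F_Ffun poly_eq_sum_coeff[where N = n] del: poly_root_poly)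

lemma sum_second_deriv_app_Ffun_powers:
  "(\<Sum>i<n. second_deriv_app n (Ffun n a) x u v i * t ^ i)
    = (\<Sum>k<n. \<Sum>l<n. u l * v k * (if k = l then 0 else poly (root_poly x ({..<n} - {l, k})) t))"
proof -
  have "(\<Sum>i<n. second_deriv_app n (Ffun n a) x u v i * t ^ i)
      = (\<Sum>k<n. \<Sum>l<n. u l * v k * (\<Sum>i<n. pderiv2F (Ffun n a) x i l k * t ^ i))"
    unfolding second_deriv_app_def sum_distrib_right sum_distrib_left
    by (subst sum.swap, rule sum.cong[OF refl], subst sum.swap) (simp add: mult_ac)
  then show ?thesis
    by (simp add: sum_pderiv2F_Ffun_powers del: poly_root_poly)
qed

lemma sum_second_deriv_app_Ffun_node:
  assumes "j < n"
  shows "(\<Sum>i<n. second_deriv_app n (Ffun n a) x u v i * x j ^ i)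
    = (\<Sum>l\<in>{..<n} - {j}. (u l * v j + u j * v l) * (\<Prod>m\<in>{..<n} - {j, l}. x j - x m))"
proof -
  define T where "T k l = u l * v k * (if k = l then 0 else poly (root_poly x ({..<n} - {l, k})) (x j))"
    for k l
  have T_off: "T k l = 0" if "k \<noteq> j" "l \<noteq> j" for k l
    using that assms by (auto simp: T_def simp del: poly_root_poly intro!: poly_root_poly_node)
  have row_j: "(\<Sum>l<n. T j l) = (\<Sum>l\<in>{..<n} - {j}. T j l)"
    using assms by (simp add: sum.remove T_def)
  have row_k: "(\<Sum>l<n. T k l) = T k j" if "k \<noteq> j" for k
    using assms that by (subst sum.remove[of _ j]) (auto simp: T_off)
  have "(\<Sum>k<n. \<Sum>l<n. T k l) = (\<Sum>l<n. T j l) + (\<Sum>k\<in>{..<n} - {j}. \<Sum>l<n. T k l)"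
    using assms by (simp add: sum.remove[of "{..<n}" j "\<lambda>k. \<Sum>l<n. T k l"])
  also have "\<dots> = (\<Sum>l\<in>{..<n} - {j}. T j l) + (\<Sum>k\<in>{..<n} - {j}. T k j)"
    by (simp add: row_j row_k)
  also have "\<dots> = (\<Sum>l\<in>{..<n} - {j}. (u l * v j + u j * v l) * (\<Prod>m\<in>{..<n} - {j, l}. x j - x m))"
    by (simp add: T_def sum.distrib[symmetric] insert_commute algebra_simps)
  finally show ?thesis
    by (simp add: sum_second_deriv_app_Ffun_powers T_def del: poly_root_poly)
qed

lemma inv_apply_pderivF_Ffun:
  assumes "\<forall>i<n. \<forall>j<n. i \<noteq> j \<longrightarrow> x i \<noteq> x j" "l < n"
  shows "inv_apply n (pderivF (Ffun n a) x) b l = (\<Sum>i<n. b i * x l ^ i) / Bpoly n x l (x l)"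
proof (rule inv_apply_diagonalized_by_nodes)
  show "inj_on x {..<n}"
    using assms(1) unfolding inj_on_def lessThan_iff by blast
  show "(\<Sum>i<n. pderivF (Ffun n a) x i k * x j ^ i) = (if k = j then Bpoly n x j (x j) else 0)"
    if "k < n" "j < n" for k j
    using that by (simp add: sum_pderivF_Ffun_powers Bpoly_other_node)
qed (use assms Bpoly_own_node_nonzero in auto)

lemma inv_apply_pderivF_Ffun_Ffun:
  assumes "\<forall>i<n. \<forall>j<n. i \<noteq> j \<longrightarrow> x i \<noteq> x j" "l < n"
  shows "inv_apply n (pderivF (Ffun n a) x) (Ffun n a x) l = Weier n a x l"
  using assms poly_root_poly_node[of "{..<n}" l x]
  by (simp add: inv_apply_pderivF_Ffun Weier_eq sum_Ffun_powers del: poly_root_poly)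

lemma sum_chebyshev_rhs_node:
  assumes "j < n"
  shows "(\<Sum>i<n. (Ffun n a x i + 1/2 * second_deriv_app n (Ffun n a) x u u i) * x j ^ i)
    = - pval n a (x j) + u j * (\<Sum>l\<in>{..<n} - {j}. u l * (\<Prod>m\<in>{..<n} - {j, l}. x j - x m))"
proof -
  have "(\<Sum>i<n. (Ffun n a x i + 1/2 * second_deriv_app n (Ffun n a) x u u i) * x j ^ i)
      = (\<Sum>i<n. Ffun n a x i * x j ^ i) + 1/2 * (\<Sum>i<n. second_deriv_app n (Ffun n a) x u u i * x j ^ i)"
    by (simp add: distrib_right sum.distrib sum_distrib_left mult.assoc)
  also have "(\<Sum>i<n. Ffun n a x i * x j ^ i) = - pval n a (x j)"
    using assms by (simp add: sum_Ffun_powers poly_root_poly_node del: poly_root_poly)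
  also have "(\<Sum>i<n. second_deriv_app n (Ffun n a) x u u i * x j ^ i)
      = 2 * (u j * (\<Sum>l\<in>{..<n} - {j}. u l * (\<Prod>m\<in>{..<n} - {j, l}. x j - x m)))"
    unfolding sum_second_deriv_app_Ffun_node[OF assms] by (simp add: sum_distrib_left algebra_simps)
  finally show ?thesis by simp
qed

lemma chebyshev_step_eq:
  assumes distinct: "\<forall>i<n. \<forall>j<n. i \<noteq> j \<longrightarrow> x i \<noteq> x j" and j: "j < n"
  shows "chebyshev_step n a x j
    = x j - Weier n a x j * (1 + (\<Sum>l\<in>{..<n} - {j}. Weier n a x l / (x l - x j)))"
proof -
  define W where "W = Weier n a x"
  define Q where "Q l = (\<Prod>m\<in>{..<n} - {j, l}. x j - x m)" for l
  define u where "u = inv_apply n (pderivF (Ffun n a) x) (Ffun n a x)"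
  have u: "u l = W l" if "l < n" for l
    using inv_apply_pderivF_Ffun_Ffun[OF distinct that] by (simp add: u_def W_def)
  have "chebyshev_step n a x j
      = x j - (\<Sum>i<n. (Ffun n a x i + 1/2 * second_deriv_app n (Ffun n a) x u u i) * x j ^ i)
              / Bpoly n x j (x j)"
    unfolding chebyshev_step_def Let_def u_def[symmetric]
    by (simp add: inv_apply_pderivF_Ffun[OF distinct j])
  also have "\<dots> = x j - (- pval n a (x j) + W j * (\<Sum>l\<in>{..<n} - {j}. W l * Q l)) / Bpoly n x j (x j)"
    unfolding sum_chebyshev_rhs_node[OF j] using j by (simp add: u Q_def)
  also have "(\<Sum>l\<in>{..<n} - {j}. W l * Q l) = Bpoly n x j (x j) * (\<Sum>l\<in>{..<n} - {j}. W l / (x l - x j))"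
    using prod_omit_pair_eq_Bpoly_div[OF distinct j] by (simp add: Q_def sum_distrib_left mult_ac)
  also have "(- pval n a (x j) + W j * (Bpoly n x j (x j) * (\<Sum>l\<in>{..<n} - {j}. W l / (x l - x j))))
      / Bpoly n x j (x j) = W j * (1 + (\<Sum>l\<in>{..<n} - {j}. W l / (x l - x j)))"
    using Bpoly_own_node_nonzero[OF distinct j]
    unfolding W_def Weier_eq[of n a x j] by (simp add: field_simps)
  finally show ?thesis by (simp add: W_def)
qed

theorem mainTheorem7:
  fixes n :: nat and a :: "nat \<Rightarrow> real" and x :: "nat \<Rightarrow> complex"
  assumes "n \<ge> 2"
    and "\<forall>i<n. \<forall>j<n. i \<noteq> j \<longrightarrow> x i \<noteq> x j"
  shows "\<forall>j<n.
     chebyshev_step n a x j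
       = x j - Weier n a x j * (1 + (\<Sum>\<nu>\<in>{..<n} - {j}. Weier n a x \<nu> / (x \<nu> - x j)))
   \<and> chebyshev_step n a x j
       = x j - pval n a (x j) / Bpoly n x j (x j)
           * ((\<Sum>\<nu>\<in>{..<n} - {j}. pval n a (x \<nu>) / ((x \<nu> - x j) * Bpoly n x \<nu> (x \<nu>))) - 1)"
proof (intro allI impI conjI)
  fix j assume "j < n"
  show first: "chebyshev_step n a x j
    = x j - Weier n a x j * (1 + (\<Sum>\<nu>\<in>{..<n} - {j}. Weier n a x \<nu> / (x \<nu> - x j)))"
    using chebyshev_step_eq[OF assms(2) \<open>j < n\<close>] .
  have "(\<Sum>\<nu>\<in>{..<n} - {j}. pval n a (x \<nu>) / ((x \<nu> - x j) * Bpoly n x \<nu> (x \<nu>)))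
      = - (\<Sum>\<nu>\<in>{..<n} - {j}. Weier n a x \<nu> / (x \<nu> - x j))"
    unfolding sum_negf[symmetric] by (intro sum.cong) (simp_all add: Weier_eq mult.commute)
  then show "chebyshev_step n a x j
       = x j - pval n a (x j) / Bpoly n x j (x j)
           * ((\<Sum>\<nu>\<in>{..<n} - {j}. pval n a (x \<nu>) / ((x \<nu> - x j) * Bpoly n x \<nu> (x \<nu>))) - 1)"
    unfolding first by (simp add: Weier_eq algebra_simps)
qed

end
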